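(* Assume $\lfloor (M_1+\dots+M_n)/p\rfloor=n-1$ (ample reduction). For $l=1,\dots,n-1$ let $i(l)$ be the unique positive integer with $0\le\sum_{j=i(l)}^nM_j-lp<M_{i(l)}$. Then $i(l)=n-l$ for $l=1,\dots,n-1$.
   Context: $p,q$ are primes, $n$ a positive integer with $p>n\ge2$, $p>q$; $m_1,\dots,m_n$ are positive integers $<q$, and $M_i$ is the least positive integer with $M_i\equiv -m_iq^{-1}\pmod p$ (so $1\le M_i\le p-1$). *)

theory Defs
  imports "HOL-Number_Theory.Number_Theory"
begin

definition Mred :: "nat \<Rightarrow> nat \<Rightarrow> nat \<Rightarrow> nat" where
  "Mred p q m = (LEAST M::nat. 0 < M \<and> [int M * int q = - int m] (mod int p))"

end

theory Submission
  imports Defs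
begin

text \<open>Every reduction \<open>M\<^sub>j\<close> is less than \<open>p\<close>, so a tail sum of \<open>l\<close> of them stays below
  \<open>l p\<close>, while ample reduction \<open>\<Sum> M\<^sub>j \<ge> (n-1) p\<close> forces the tail starting at \<open>n - l\<close> to
  reach \<open>l p\<close> (the other \<open>n - l - 1\<close> terms contribute at most \<open>(n - l - 1) p\<close>).
  Hence the tail sums, which decrease in the starting index, cross the level \<open>l p\<close>
  exactly between \<open>n - l + 1\<close> and \<open>n - l\<close>.\<close>

lemma Mred_less:
  assumes "0 < p" "coprime q p" "\<not> p dvd m"
  shows "Mred p q m < p"
proof -
  obtain x where x: "[int q * x = 1] (mod int p)"
    using assms(2) cong_solve_coprime_int[of "int q" "int p"] by auto
  define M where "M = nat ((- int m * x) mod int p)"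
  have int_M: "int M = (- int m * x) mod int p"
    unfolding M_def using assms(1) by simp
  have "M < p"
    unfolding M_def using assms(1) by (simp add: nat_less_iff)
  have M_cong: "[int M * int q = - int m] (mod int p)"
  proof -
    have "[int M * int q = (- int m * x) * int q] (mod int p)"
      unfolding int_M by (simp add: cong_def mod_mult_left_eq)
    also have "[(- int m * x) * int q = - int m * 1] (mod int p)"
      using x by (metis cong_scalar_left mult.assoc mult.commute)
    finally show ?thesis by simp
  qed
  have "M \<noteq> 0"
  proof
    assume "M = 0"
    with M_cong have "[- int m = 0] (mod int p)"
      by (simp add: cong_sym_eq)
    then have "int p dvd int m"
      by (simp add: cong_0_iff)
    with assms(3) show False by simp
  qed
  with M_cong have "Mred p q m \<le> M"
    unfolding Mred_def by (intro Least_le) simp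
  with \<open>M < p\<close> show ?thesis by simp
qed

lemma tail_sum_ge_if_total_ge:
  fixes M :: "nat \<Rightarrow> nat"
  assumes bound: "\<And>j. j \<in> {1..n} \<Longrightarrow> M j \<le> p"
    and total: "(n - 1) * p \<le> (\<Sum>j=1..n. M j)" and "l < n"
  shows "l * p \<le> (\<Sum>j=n-l..n. M j)"
proof -
  have "{1..n} = {1..<n-l} \<union> {n-l..n}"
    using \<open>l < n\<close> by auto
  then have "(\<Sum>j=1..n. M j) = (\<Sum>j=1..<n-l. M j) + (\<Sum>j=n-l..n. M j)"
    by (simp add: sum.union_disjoint ivl_disj_int)
  moreover have "(\<Sum>j=1..<n-l. M j) \<le> of_nat (card {1..<n-l}) * p"
    by (rule sum_bounded_above) (use bound in auto)
  then have "(\<Sum>j=1..<n-l. M j) \<le> (n - l - 1) * p"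
    by simp
  moreover have "(n - 1) * p = (n - l - 1) * p + l * p"
    using \<open>l < n\<close> by (simp add: add_mult_distrib[symmetric])
  ultimately show ?thesis using total by linarith
qed

lemma tail_sum_less:
  fixes M :: "nat \<Rightarrow> nat"
  assumes "\<And>j. j \<in> {1..n} \<Longrightarrow> M j < p" and "0 < l" "l \<le> n"
  shows "(\<Sum>j=Suc (n-l)..n. M j) < l * p"
  using sum_bounded_above_strict[of "{Suc (n-l)..n}" M p] assms by auto

lemma tail_sum_crossing_unique:
  fixes M :: "nat \<Rightarrow> nat"
  assumes "i \<le> n" and below: "(\<Sum>j=Suc k..n. M j) < x" and above: "x \<le> (\<Sum>j=k..n. M j)"
  shows "x \<le> (\<Sum>j=i..n. M j) \<and> (\<Sum>j=i..n. M j) < x + M i \<longleftrightarrow> i = k"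
proof -
  have antitone: "(\<Sum>j=b..n. M j) \<le> (\<Sum>j=a..n. M j)" if "a \<le> b" for a b
    using that by (intro sum_mono2) auto
  have "(\<Sum>j=i..n. M j) = M i + (\<Sum>j=Suc i..n. M j)"
    using \<open>i \<le> n\<close> by (simp add: sum.atLeast_Suc_atMost)
  moreover have "\<not> (\<Sum>j=Suc i..n. M j) < x" if "i < k"
    using antitone[of "Suc i" k] that above by linarith
  moreover have "\<not> x \<le> (\<Sum>j=i..n. M j)" if "k < i"
    using antitone[of "Suc k" i] that below by linarith
  ultimately show ?thesis
    using below above by (cases i k rule: linorder_cases) auto
qed

theorem corollary6p4:
  fixes p q n :: nat and m :: "nat \<Rightarrow> nat"
  assumes "prime p" and "prime q" and "2 \<le> n" and "n < p" and "q < p"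
    and "\<And>i. i \<in> {1..n} \<Longrightarrow> 0 < m i \<and> m i < q"
    and "(\<Sum>j=1..n. Mred p q (m j)) div p = n - 1"
  shows "\<forall>l \<in> {1..n-1}. \<forall>i \<in> {1..n}.
           (0 \<le> (\<Sum>j=i..n. int (Mred p q (m j))) - int l * int p \<and>
            (\<Sum>j=i..n. int (Mred p q (m j))) - int l * int p < int (Mred p q (m i)))
           \<longleftrightarrow> i = n - l"
proof (intro ballI)
  fix l i assume l: "l \<in> {1..n-1}" and i: "i \<in> {1..n}"
  define M where "M j = Mred p q (m j)" for j
  have "coprime q p"
    using assms(1,2,5) primes_coprime[of q p] by simp
  have M_less: "M j < p" if "j \<in> {1..n}" for j
    unfolding M_def using assms(6)[OF that] assms(1,5) \<open>coprime q p\<close>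
    by (intro Mred_less) (auto simp: prime_gt_0_nat dest: dvd_imp_le)
  have "(\<Sum>j=1..n. M j) div p * p \<le> (\<Sum>j=1..n. M j)"
    by (rule div_times_less_eq_dividend)
  then have "(n - 1) * p \<le> (\<Sum>j=1..n. M j)"
    unfolding M_def assms(7) .
  then have "l * p \<le> (\<Sum>j=n-l..n. M j)"
    using l M_less by (intro tail_sum_ge_if_total_ge) (auto intro: less_imp_le)
  moreover have "(\<Sum>j=Suc (n-l)..n. M j) < l * p"
    using l M_less by (intro tail_sum_less) auto
  ultimately have "l * p \<le> (\<Sum>j=i..n. M j) \<and> (\<Sum>j=i..n. M j) < l * p + M i \<longleftrightarrow> i = n - l"
    using i by (intro tail_sum_crossing_unique) auto
  moreover have "(\<Sum>j=i..n. int (Mred p q (m j))) = int (\<Sum>j=i..n. M j)"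
    unfolding M_def by simp
  ultimately show "(0 \<le> (\<Sum>j=i..n. int (Mred p q (m j))) - int l * int p \<and>
            (\<Sum>j=i..n. int (Mred p q (m j))) - int l * int p < int (Mred p q (m i)))
           \<longleftrightarrow> i = n - l"
    unfolding M_def
    by (simp only: of_nat_mult[symmetric] of_nat_add[symmetric] diff_ge_0_iff_ge
        diff_less_eq add.commute of_nat_le_iff of_nat_less_iff)
qed

end
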